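(* For every nonnegative integer $n$ and every $0\le k\le n$, \[ B_{n,k}(q)=q^{2nk-n^2}\,B_{n,n-k}(q). \]
   Context: $\mathcal{B}_n$ is the group of signed permutations of $[n]$ (bijections $\pi$ of $\{\pm1,\dots,\pm n\}$ with $\pi(-i)=-\pi(i)$, written $\pi=\pi_1\cdots\pi_n$), integers ordered naturally. Set $\pi_0=0$; $\mathrm{Des}_B(\pi)=\{i\in\{0,\dots,n-1\}:\pi_i>\pi_{i+1}\}$, $\mathrm{des}_B(\pi)=|\mathrm{Des}_B(\pi)|$, $\mathrm{neg}(\pi)=|\{i\in[n]:\pi_i<0\}|$, $\mathrm{fmaj}(\pi)=\sum_{i\in\mathrm{Des}_B(\pi)}2i+\mathrm{neg}(\pi)$. Define $B_{n,k}(q)$ by $\sum_{\pi\in\mathcal{B}_n}t^{\mathrm{des}_B(\pi)}q^{\mathrm{fmaj}(\pi)}=\sum_{k=0}^nB_{n,k}(q)t^k$. *)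

theory Defs
  imports Complex_Main
begin

text \<open>A signed permutation of [n] is represented by its window notation
  pi_1 ... pi_n as a list of integers of length n whose absolute values
  are exactly 1..n.\<close>
definition signed_perms :: "nat \<Rightarrow> int list set" where
  "signed_perms n = {xs. length xs = n \<and> set (map abs xs) = {1..int n}}"

text \<open>pi_i with the convention pi_0 = 0 (so index i refers to pi_i).\<close>
definition sp_val :: "int list \<Rightarrow> nat \<Rightarrow> int" where
  "sp_val xs i = (0 # xs) ! i"

definition DesB :: "int list \<Rightarrow> nat set" where
  "DesB xs = {i. i < length xs \<and> sp_val xs i > sp_val xs (Suc i)}"

definition desB :: "int list \<Rightarrow> nat" where
  "desB xs = card (DesB xs)"

definition negB :: "int list \<Rightarrow> nat" where
  "negB xs = card {i. 1 \<le> i \<and> i \<le> length xs \<and> sp_val xs i < 0}"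

definition fmaj :: "int list \<Rightarrow> nat" where
  "fmaj xs = (\<Sum>i\<in>DesB xs. 2 * i) + negB xs"

text \<open>B_{n,k}(q): coefficient of t^k in the bivariate generating function,
  i.e. the sum of q^fmaj over signed permutations with k descents,
  regarded as a polynomial function of q.\<close>
definition Bnk :: "nat \<Rightarrow> nat \<Rightarrow> 'a::comm_ring_1 \<Rightarrow> 'a" where
  "Bnk n k q = (\<Sum>\<pi>\<in>{\<pi>\<in>signed_perms n. desB \<pi> = k}. q ^ fmaj \<pi>)"

end

theory Submission
  imports Defs
begin

(* Let rot (rot_val n) rotate -n < ... < -1 < 1 < ... < n cyclically by n places, and let
   pi' (sp_flip n pi) be given by pi'_i = rot(pi_(n+1-i)); this is an involution of B_n.
   Since rot preserves the order of two letters of equal sign and reverses it otherwise, the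
   descent indicators of pi at j and of pi' at n - j add up to 1 + [pi_(j+1) < 0] - [pi_j < 0],
   while neg pi' = n - neg pi. Summing these relations (with weights 2j, by a summation by parts)
   gives desB pi' = n - desB pi and fmaj pi = fmaj pi' + 2n desB pi - n^2, and reindexing the sum
   defining B_(n,k) along the involution gives the claim. *)

lemma sum_unit_increments:
  fixes E :: "nat \<Rightarrow> int"
  shows "(\<Sum>j=1..<Suc n. 1 + E (Suc j) - E j) = int n + E (Suc n) - E 1"
proof -
  have "(\<Sum>j=1..<Suc n. 1 + E (Suc j) - E j) = (\<Sum>j=1..<Suc n. 1 + (E (Suc j) - E j))"
    by (simp add: algebra_simps)
  also have "\<dots> = int n + (E (Suc n) - E 1)"
    by (simp only: sum.distrib sum_Suc_diff'[where m=1 and n="Suc n"]) simp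
  finally show ?thesis by simp
qed

lemma sum_weighted_unit_increments:
  fixes E :: "nat \<Rightarrow> int"
  shows "2 * (\<Sum>j=1..<n. int (n - j) * (1 + E (Suc j) - E j))
    = int n * (int n - 1) + 2 * (\<Sum>i=1..n. E i) - 2 * int n * E 1"
proof (induction n)
  case 0
  then show ?case by simp
next
  case (Suc n)
  let ?X = "\<lambda>j. 1 + E (Suc j) - E j"
  have "(\<Sum>j=1..<Suc n. int (Suc n - j) * ?X j)
      = (\<Sum>j=1..<Suc n. int (n - j) * ?X j) + (\<Sum>j=1..<Suc n. ?X j)"
    by (simp add: sum.distrib[symmetric] Suc_diff_le algebra_simps)
  also have "(\<Sum>j=1..<Suc n. int (n - j) * ?X j) = (\<Sum>j=1..<n. int (n - j) * ?X j)"
    by (cases n) simp_all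
  finally show ?case
    using Suc.IH sum_unit_increments[where E=E and n=n] by (simp add: algebra_simps)
qed

(* D, D' and E play the roles of the descent indicators of pi and pi' and the negativity
   indicator of pi. *)
lemma complementary_indicator_sums:
  fixes D D' E :: "nat \<Rightarrow> int"
  assumes "0 < n" and D0: "D 0 = E 1" and D'0: "D' 0 = 1 - E n"
    and pair: "\<And>j. 0 < j \<Longrightarrow> j < n \<Longrightarrow> D j + D' (n - j) = 1 + E (Suc j) - E j"
  shows "(\<Sum>j<n. D j) + (\<Sum>j<n. D' j) = int n"
    and "(\<Sum>j<n. 2 * int j * D j) + 2 * (\<Sum>i=1..n. E i)
      = (\<Sum>j<n. 2 * int j * D' j) + 2 * int n * (\<Sum>j<n. D j) - int n * (int n - 1)"
proof -
  obtain m where n: "n = Suc m" using \<open>0 < n\<close> gr0_implies_Suc by blast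
  have split: "(\<Sum>j<n. f j) = f 0 + (\<Sum>j=1..<n. f j)" for f :: "nat \<Rightarrow> int"
    unfolding n lessThan_atLeast0 by (simp add: sum.atLeast_Suc_lessThan)
  have reflect: "(\<Sum>j=1..<n. f (n - j)) = (\<Sum>j=1..<n. f j)" for f :: "nat \<Rightarrow> int"
    using sum.atLeastLessThan_rev[of f 1 n] by simp
  have "(\<Sum>j<n. D j) + (\<Sum>j<n. D' j) = D 0 + D' 0 + (\<Sum>j=1..<n. D j + D' (n - j))"
    using split[of D] split[of D'] reflect[of D'] by (simp add: sum.distrib)
  also have "\<dots> = E 1 + 1 - E n + (\<Sum>j=1..<n. 1 + E (Suc j) - E j)"
    using D0 D'0 by (simp add: pair)
  also have "\<dots> = int n"
    using sum_unit_increments[where E=E and n=m] n by simp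
  finally show "(\<Sum>j<n. D j) + (\<Sum>j<n. D' j) = int n" .
  have "(\<Sum>j<n. 2 * int j * D j) - (\<Sum>j<n. 2 * int j * D' j)
      = (\<Sum>j=1..<n. 2 * int j * D j - 2 * int (n - j) * D' (n - j))"
    using split[of "\<lambda>j. 2 * int j * D j"] split[of "\<lambda>j. 2 * int j * D' j"]
      reflect[of "\<lambda>j. 2 * int j * D' j"] by (simp add: sum_subtractf)
  also have "\<dots> = (\<Sum>j=1..<n. 2 * int n * D j - 2 * (int (n - j) * (1 + E (Suc j) - E j)))"
  proof (rule sum.cong)
    fix j assume "j \<in> {1..<n}"
    then have D': "D' (n - j) = 1 + E (Suc j) - E j - D j"
      and diff: "int (n - j) = int n - int j"
      using pair[of j] by auto
    show "2 * int j * D j - 2 * int (n - j) * D' (n - j)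
        = 2 * int n * D j - 2 * (int (n - j) * (1 + E (Suc j) - E j))"
      unfolding D' diff by (simp add: algebra_simps)
  qed simp
  also have "\<dots> = 2 * int n * (\<Sum>j=1..<n. D j)
      - 2 * (\<Sum>j=1..<n. int (n - j) * (1 + E (Suc j) - E j))"
    by (simp add: sum_subtractf sum_distrib_left mult.assoc)
  also have "\<dots> = 2 * int n * ((\<Sum>j<n. D j) - E 1)
      - (int n * (int n - 1) + 2 * (\<Sum>i=1..n. E i) - 2 * int n * E 1)"
    using split[of D] D0 sum_weighted_unit_increments[where E=E and n=n] by simp
  also have "\<dots> = 2 * int n * (\<Sum>j<n. D j) - int n * (int n - 1) - 2 * (\<Sum>i=1..n. E i)"
    by (simp add: algebra_simps)
  finally show "(\<Sum>j<n. 2 * int j * D j) + 2 * (\<Sum>i=1..n. E i)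
      = (\<Sum>j<n. 2 * int j * D' j) + 2 * int n * (\<Sum>j<n. D j) - int n * (int n - 1)"
    by simp
qed

definition rot_val :: "nat \<Rightarrow> int \<Rightarrow> int" where
  "rot_val n v = (if 0 < v then v - int n - 1 else v + int n + 1)"

definition sp_flip :: "nat \<Rightarrow> int list \<Rightarrow> int list" where
  "sp_flip n xs = rev (map (rot_val n) xs)"

definition des_ind :: "int list \<Rightarrow> nat \<Rightarrow> int" where
  "des_ind xs j = of_bool (sp_val xs (Suc j) < sp_val xs j)"

definition neg_ind :: "int list \<Rightarrow> nat \<Rightarrow> int" where
  "neg_ind xs i = of_bool (sp_val xs i < 0)"

lemma rot_val_neg_iff:
  assumes "a \<noteq> 0" "\<bar>a\<bar> \<le> int n"
  shows "rot_val n a < 0 \<longleftrightarrow> 0 < a"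
  using assms by (auto simp: rot_val_def)

lemma rot_val_rot_val:
  assumes "a \<noteq> 0" "\<bar>a\<bar> \<le> int n"
  shows "rot_val n (rot_val n a) = a"
  using assms by (auto simp: rot_val_def)

lemma abs_rot_val:
  assumes "a \<noteq> 0" "\<bar>a\<bar> \<le> int n"
  shows "\<bar>rot_val n a\<bar> = int n + 1 - \<bar>a\<bar>"
  using assms by (auto simp: rot_val_def)

lemma descent_plus_rot_val_descent:
  assumes "a \<noteq> 0" "b \<noteq> 0" "\<bar>a\<bar> \<le> int n" "\<bar>b\<bar> \<le> int n" "a \<noteq> b"
  shows "of_bool (b < a) + of_bool (rot_val n a < rot_val n b)
    = 1 + of_bool (b < 0) - (of_bool (a < 0) :: int)"
  using assms by (auto simp: rot_val_def)

lemma signed_perms_length: "xs \<in> signed_perms n \<Longrightarrow> length xs = n"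
  by (simp add: signed_perms_def)

lemma signed_perms_distinct_abs: "xs \<in> signed_perms n \<Longrightarrow> distinct (map abs xs)"
  by (intro card_distinct) (simp add: signed_perms_def)

lemma signed_perms_entry:
  assumes "xs \<in> signed_perms n" "v \<in> set xs"
  shows "v \<noteq> 0 \<and> \<bar>v\<bar> \<le> int n"
proof -
  have "\<bar>v\<bar> \<in> set (map abs xs)" using assms(2) by simp
  then show ?thesis using assms(1) by (auto simp: signed_perms_def)
qed

lemma sp_val_Suc: "sp_val xs (Suc i) = xs ! i"
  by (simp add: sp_val_def)

lemma sp_val_signed_perms_bounds:
  assumes "xs \<in> signed_perms n" "1 \<le> i" "i \<le> n"
  shows "sp_val xs i \<noteq> 0 \<and> \<bar>sp_val xs i\<bar> \<le> int n"
  using assms signed_perms_entry[OF assms(1) nth_mem, of "i - 1"]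
    signed_perms_length[OF assms(1)]
  by (cases i) (auto simp: sp_val_Suc)

lemma sp_val_signed_perms_neq:
  assumes "xs \<in> signed_perms n" "1 \<le> i" "i < j" "j \<le> n"
  shows "sp_val xs i \<noteq> sp_val xs j"
  using assms nth_eq_iff_index_eq[OF signed_perms_distinct_abs[OF assms(1)], of "i - 1" "j - 1"]
    signed_perms_length[OF assms(1)]
  by (cases i; cases j) (auto simp: sp_val_Suc)

lemma sp_val_sp_flip:
  assumes "length xs = n" "1 \<le> i" "i \<le> n"
  shows "sp_val (sp_flip n xs) i = rot_val n (sp_val xs (n + 1 - i))"
proof -
  have "n + 1 - i = Suc (n - i)" using assms by simp
  then show ?thesis using assms
    by (cases i) (simp_all add: sp_val_Suc sp_flip_def rev_nth)
qed

lemma des_ind_0: "des_ind xs 0 = neg_ind xs 1"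
  by (simp add: des_ind_def neg_ind_def sp_val_def)

lemma des_ind_sp_flip_0:
  assumes "xs \<in> signed_perms n" "0 < n"
  shows "des_ind (sp_flip n xs) 0 = 1 - neg_ind xs n"
  using assms sp_val_sp_flip[OF signed_perms_length[OF assms(1)], of 1]
    sp_val_signed_perms_bounds[OF assms(1), of n]
  by (auto simp: des_ind_def neg_ind_def sp_val_def rot_val_def)

lemma des_ind_plus_des_ind_sp_flip:
  assumes xs: "xs \<in> signed_perms n" and "0 < j" "j < n"
  shows "des_ind xs j + des_ind (sp_flip n xs) (n - j)
    = 1 + neg_ind xs (Suc j) - neg_ind xs j"
proof -
  have l: "length xs = n" using signed_perms_length[OF xs] .
  have "sp_val (sp_flip n xs) (n - j) = rot_val n (sp_val xs (Suc j))"
    and "sp_val (sp_flip n xs) (Suc (n - j)) = rot_val n (sp_val xs j)"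
    using sp_val_sp_flip[OF l, of "n - j"] sp_val_sp_flip[OF l, of "Suc (n - j)"] assms
    by (simp_all add: Suc_diff_le)
  then show ?thesis
    using descent_plus_rot_val_descent[of "sp_val xs j" "sp_val xs (Suc j)" n]
      sp_val_signed_perms_bounds[OF xs, of j] sp_val_signed_perms_bounds[OF xs, of "Suc j"]
      sp_val_signed_perms_neq[OF xs, of j "Suc j"] assms
    by (simp add: des_ind_def neg_ind_def)
qed

lemma neg_ind_sp_flip:
  assumes "xs \<in> signed_perms n" "1 \<le> i" "i \<le> n"
  shows "neg_ind (sp_flip n xs) i = 1 - neg_ind xs (n + 1 - i)"
proof -
  have "sp_val xs (n + 1 - i) \<noteq> 0 \<and> \<bar>sp_val xs (n + 1 - i)\<bar> \<le> int n"
    using sp_val_signed_perms_bounds[OF assms(1)] assms by simp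
  then show ?thesis
    using sp_val_sp_flip[OF signed_perms_length[OF assms(1)] assms(2,3)]
    by (auto simp: neg_ind_def rot_val_neg_iff)
qed

lemma desB_eq_sum: "int (desB xs) = (\<Sum>j<length xs. des_ind xs j)"
proof -
  have "DesB xs = {..<length xs} \<inter> {j. sp_val xs (Suc j) < sp_val xs j}"
    by (auto simp: DesB_def)
  then show ?thesis by (simp add: desB_def des_ind_def)
qed

lemma negB_eq_sum: "int (negB xs) = (\<Sum>i=1..length xs. neg_ind xs i)"
proof -
  have "{i. 1 \<le> i \<and> i \<le> length xs \<and> sp_val xs i < 0}
      = {1..length xs} \<inter> {i. sp_val xs i < 0}"
    by auto
  then show ?thesis by (simp add: negB_def neg_ind_def)
qed

lemma fmaj_eq_sum:
  "int (fmaj xs) = (\<Sum>j<length xs. 2 * int j * des_ind xs j) + int (negB xs)"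
proof -
  have "DesB xs = {..<length xs} \<inter> {j. sp_val xs (Suc j) < sp_val xs j}"
    by (auto simp: DesB_def)
  then show ?thesis by (simp add: fmaj_def des_ind_def)
qed

lemma sp_flip_signed_perms:
  assumes xs: "xs \<in> signed_perms n"
  shows "sp_flip n xs \<in> signed_perms n"
proof -
  have abs_flip: "map (abs \<circ> rot_val n) xs = map ((-) (int n + 1) \<circ> abs) xs"
    using abs_rot_val signed_perms_entry[OF xs] by (intro map_cong) simp_all
  have "set (map abs (sp_flip n xs)) = set (map (abs \<circ> rot_val n) xs)"
    by (simp add: sp_flip_def image_comp)
  also have "\<dots> = (-) (int n + 1) ` set (map abs xs)"
    unfolding abs_flip by (simp add: image_comp)
  also have "set (map abs xs) = {1..int n}"
    using xs by (simp add: signed_perms_def)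
  finally show ?thesis
    using signed_perms_length[OF xs] by (simp add: signed_perms_def sp_flip_def)
qed

lemma sp_flip_sp_flip:
  assumes xs: "xs \<in> signed_perms n"
  shows "sp_flip n (sp_flip n xs) = xs"
  using rot_val_rot_val signed_perms_entry[OF xs]
  by (simp add: sp_flip_def rev_map[symmetric] map_idI)

lemma negB_sp_flip:
  assumes xs: "xs \<in> signed_perms n"
  shows "int (negB (sp_flip n xs)) = int n - int (negB xs)"
proof -
  have l: "length (sp_flip n xs) = n" "length xs = n"
    using signed_perms_length[OF xs] by (simp_all add: sp_flip_def)
  have "(\<Sum>i=1..n. neg_ind (sp_flip n xs) i) = (\<Sum>i=1..n. 1 - neg_ind xs (n + 1 - i))"
    using neg_ind_sp_flip[OF xs] by simp
  also have "\<dots> = int n - (\<Sum>i=1..n. neg_ind xs i)"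
    using sum.atLeastAtMost_rev[of "neg_ind xs" 1 n] by (simp add: sum_subtractf)
  finally show ?thesis using l by (simp add: negB_eq_sum)
qed

lemma sp_flip_indicator_sums:
  assumes xs: "xs \<in> signed_perms n" and "0 < n"
  shows "(\<Sum>j<n. des_ind xs j) + (\<Sum>j<n. des_ind (sp_flip n xs) j) = int n"
    and "(\<Sum>j<n. 2 * int j * des_ind xs j) + 2 * (\<Sum>i=1..n. neg_ind xs i)
      = (\<Sum>j<n. 2 * int j * des_ind (sp_flip n xs) j)
        + 2 * int n * (\<Sum>j<n. des_ind xs j) - int n * (int n - 1)"
  using complementary_indicator_sums[where D = "des_ind xs" and D' = "des_ind (sp_flip n xs)"
      and E = "neg_ind xs", OF \<open>0 < n\<close> des_ind_0 des_ind_sp_flip_0[OF xs \<open>0 < n\<close>]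
      des_ind_plus_des_ind_sp_flip[OF xs]]
  by simp_all

lemma desB_sp_flip:
  assumes xs: "xs \<in> signed_perms n"
  shows "desB (sp_flip n xs) = n - desB xs"
proof (cases "n = 0")
  case True
  then show ?thesis
    using signed_perms_length[OF xs] by (simp add: sp_flip_def desB_def DesB_def)
next
  case False
  have "int (desB xs) + int (desB (sp_flip n xs)) = int n"
    using sp_flip_indicator_sums(1)[OF xs] False signed_perms_length[OF xs]
    by (simp add: desB_eq_sum sp_flip_def)
  then show ?thesis by linarith
qed

lemma fmaj_sp_flip:
  assumes xs: "xs \<in> signed_perms n"
  shows "int (fmaj xs) = int (fmaj (sp_flip n xs)) + 2 * int n * int (desB xs) - int n ^ 2"
proof (cases "n = 0")
  case True
  then show ?thesis using signed_perms_length[OF xs] by (simp add: sp_flip_def)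
next
  case False
  then show ?thesis
    using sp_flip_indicator_sums(2)[OF xs] negB_sp_flip[OF xs] signed_perms_length[OF xs]
    by (simp add: fmaj_eq_sum desB_eq_sum negB_eq_sum sp_flip_def power2_eq_square algebra_simps)
qed

lemma bij_betw_sp_flip_desB:
  assumes "k \<le> n"
  shows "bij_betw (sp_flip n)
    {\<pi> \<in> signed_perms n. desB \<pi> = n - k} {\<pi> \<in> signed_perms n. desB \<pi> = k}"
  by (rule bij_betw_byWitness[where f' = "sp_flip n"])
    (auto simp: sp_flip_sp_flip sp_flip_signed_perms desB_sp_flip assms)

theorem proposition2p3:
  fixes n k :: nat and q :: complex
  assumes "k \<le> n" and "q \<noteq> 0"
  shows "Bnk n k q = q powi (2 * int n * int k - int n ^ 2) * Bnk n (n - k) q"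
proof -
  define e where "e = 2 * int n * int k - int n ^ 2"
  define A where "A j = {\<pi> \<in> signed_perms n. desB \<pi> = j}" for j
  have fmaj_flip: "q ^ fmaj (sp_flip n \<sigma>) = q powi e * q ^ fmaj \<sigma>" if "\<sigma> \<in> A (n - k)" for \<sigma>
  proof -
    have "int (fmaj (sp_flip n \<sigma>)) = e + int (fmaj \<sigma>)"
      using fmaj_sp_flip[of \<sigma> n] that assms(1)
      by (simp add: A_def e_def of_nat_diff power2_eq_square algebra_simps)
    then have "q ^ fmaj (sp_flip n \<sigma>) = q powi (e + int (fmaj \<sigma>))"
      by (metis power_int_of_nat)
    also have "\<dots> = q powi e * q ^ fmaj \<sigma>"
      using assms(2) by (simp add: power_int_add)
    finally show ?thesis .
  qed
  have "Bnk n k q = (\<Sum>\<pi>\<in>A k. q ^ fmaj \<pi>)"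
    by (simp add: Bnk_def A_def)
  also have "\<dots> = (\<Sum>\<sigma>\<in>A (n - k). q ^ fmaj (sp_flip n \<sigma>))"
    unfolding A_def
    by (rule sum.reindex_bij_betw[OF bij_betw_sp_flip_desB[OF assms(1)], symmetric])
  also have "\<dots> = q powi e * Bnk n (n - k) q"
    by (simp add: fmaj_flip Bnk_def A_def sum_distrib_left)
  finally show ?thesis
    unfolding e_def .
qed

end
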